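(* Let $a_0,a_1,a_2,a_3\in\mathbb{R}$ and consider the monic binary quartic form $$f(x,y)=x^4+a_3x^3y+a_2x^2y^2+a_1xy^3+a_0y^4 .$$ Let $$b_1=\tfrac14\,(4a_0-a_2^2-a_1a_3),\qquad b_2=\tfrac{a_2}{2},\qquad \lambda_0=\frac{4b_2+2\sqrt{3b_1+4b_2^2}}{3}.$$ Then $f$ is positive semi-definite if and only if $\lambda_0$ is a real number and the $3\times 3$ real symmetric matrix $$\mathbf{M}_{\lambda_0}=\begin{bmatrix}1&\frac{a_3}{2}&\frac{a_2-\lambda_0}{2}\\[2pt] \frac{a_3}{2}&\lambda_0&\frac{a_1}{2}\\[2pt] \frac{a_2-\lambda_0}{2}&\frac{a_1}{2}&a_0\end{bmatrix}$$ is positive semi-definite. Likewise, $f$ is positive definite if and only if $\lambda_0$ is a real number and $\mathbf{M}_{\lambda_0}$ is positive definite.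
   Context: A binary form $f(x,y)$ with real coefficients is positive definite (resp. positive semi-definite) if $f(x,y)>0$ (resp. $f(x,y)\ge 0$) for all real $x,y$ not both zero. The quantity $\lambda_0$ is real exactly when $3b_1+4b_2^2\ge 0$. *)

theory Defs
  imports "HOL-Analysis.Analysis"
begin

definition quartic_form :: "real \<Rightarrow> real \<Rightarrow> real \<Rightarrow> real \<Rightarrow> real \<Rightarrow> real \<Rightarrow> real" where
  "quartic_form a0 a1 a2 a3 x y =
     x^4 + a3 * x^3 * y + a2 * x^2 * y^2 + a1 * x * y^3 + a0 * y^4"

definition psd_form :: "(real \<Rightarrow> real \<Rightarrow> real) \<Rightarrow> bool" where
  "psd_form f \<longleftrightarrow> (\<forall>x y. (x \<noteq> 0 \<or> y \<noteq> 0) \<longrightarrow> f x y \<ge> 0)"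

definition pd_form :: "(real \<Rightarrow> real \<Rightarrow> real) \<Rightarrow> bool" where
  "pd_form f \<longleftrightarrow> (\<forall>x y. (x \<noteq> 0 \<or> y \<noteq> 0) \<longrightarrow> f x y > 0)"

definition psd_matrix :: "real^'n^'n \<Rightarrow> bool" where
  "psd_matrix M \<longleftrightarrow> M = transpose M \<and> (\<forall>v. v \<bullet> (M *v v) \<ge> 0)"

definition pd_matrix :: "real^'n^'n \<Rightarrow> bool" where
  "pd_matrix M \<longleftrightarrow> M = transpose M \<and> (\<forall>v. v \<noteq> 0 \<longrightarrow> v \<bullet> (M *v v) > 0)"

definition b1 :: "real \<Rightarrow> real \<Rightarrow> real \<Rightarrow> real \<Rightarrow> real" where
  "b1 a0 a1 a2 a3 = (4 * a0 - a2^2 - a1 * a3) / 4"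

definition b2 :: "real \<Rightarrow> real" where
  "b2 a2 = a2 / 2"

text \<open>lambda_0 (meaningful only when 3 b1 + 4 b2^2 \<ge> 0, i.e. when it is real).\<close>
definition lambda0 :: "real \<Rightarrow> real \<Rightarrow> real \<Rightarrow> real \<Rightarrow> real" where
  "lambda0 a0 a1 a2 a3 =
     (4 * b2 a2 + 2 * sqrt (3 * b1 a0 a1 a2 a3 + 4 * (b2 a2)^2)) / 3"

definition M_lambda :: "real \<Rightarrow> real \<Rightarrow> real \<Rightarrow> real \<Rightarrow> real \<Rightarrow> real^3^3" where
  "M_lambda a0 a1 a2 a3 l =
     vector [vector [1, a3/2, (a2 - l)/2],
             vector [a3/2, l, a1/2],
             vector [(a2 - l)/2, a1/2, a0]]"

end

theory Submission
  imports Defs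
begin

text \<open>
  The shift x = u - a3/4 turns f(x,1) into the depressed quartic
  g(u) = u^4 + p u^2 + q u + r, and lambda0 = a3^2/4 + p + m, where m is the
  nonnegative root of 3m^2 + 2pm = 4r.  This choice of m makes
  g(u) = (u^2 - m/2)^2 + (m + p) u^2 + q u + m (m + p) / 2, so the quadratic form of
  M_lambda0 is a square plus the binary form (m + p) x^2 + q x y + m (m + p)/2 y^2.
  Evaluating g at the zeros u = +-sqrt(m/2) of the square gives
  0 <= m (m + p) +- q sqrt(m/2), which is exactly the semidefiniteness of that binary
  form (strict inequalities give definiteness).  Conversely, for every lambda,
  f(x,y) is the quadratic form of M_lambda at (x^2, xy, y^2).
\<close>

lemma binary_quadratic_form_nonneg:
  fixes A B C x y :: real
  assumes "0 \<le> A" "0 \<le> C" "B^2 \<le> 4*A*C"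
  shows "0 \<le> A*x^2 + B*x*y + C*y^2"
proof (cases "A = 0")
  case True
  then show ?thesis using assms by simp
next
  case False
  have "4*A*(A*x^2 + B*x*y + C*y^2) = (2*A*x + B*y)^2 + (4*A*C - B^2)*y^2"
    by (simp add: algebra_simps power2_eq_square)
  also have "\<dots> \<ge> 0" using assms by simp
  finally show ?thesis using assms False by (simp add: zero_le_mult_iff)
qed

lemma binary_quadratic_form_pos:
  fixes A B C x y :: real
  assumes "0 < A" "B^2 < 4*A*C" "x \<noteq> 0 \<or> y \<noteq> 0"
  shows "0 < A*x^2 + B*x*y + C*y^2"
proof -
  have "0 < (2*A*x + B*y)^2 + (4*A*C - B^2)*y^2"
    using assms by (cases "y = 0") (simp_all add: add_nonneg_pos)
  also have "\<dots> = 4*A*(A*x^2 + B*x*y + C*y^2)"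
    by (simp add: algebra_simps power2_eq_square)
  finally show ?thesis using assms(1) by (simp add: zero_less_mult_iff)
qed

definition resolvent_root :: "real \<Rightarrow> real \<Rightarrow> real" where
  "resolvent_root p r = (sqrt (p^2 + 12*r) - p) / 3"

lemma resolvent_root_nonneg: "0 \<le> r \<Longrightarrow> 0 \<le> resolvent_root p r"
  unfolding resolvent_root_def by (simp add: real_le_rsqrt)

lemma resolvent_root_pos: "0 < r \<Longrightarrow> 0 < resolvent_root p r"
  unfolding resolvent_root_def by (simp add: real_less_rsqrt)

lemma resolvent_root_eq:
  assumes "0 \<le> r"
  shows "3 * (resolvent_root p r)^2 + 2 * p * resolvent_root p r = 4*r"
proof -
  define s where "s = sqrt (p^2 + 12*r)"
  have "s^2 = p^2 + 12*r" using assms by (simp add: s_def)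
  moreover have "3 * ((s - p)/3)^2 + 2 * p * ((s - p)/3) = (s^2 - p^2)/3"
    by (simp add: field_simps power2_eq_square)
  ultimately show ?thesis by (simp add: resolvent_root_def s_def)
qed

lemma resolvent_root_eq_0D:
  assumes "0 \<le> r" "resolvent_root p r = 0"
  shows "0 \<le> p"
proof -
  have "sqrt (p^2 + 12*r) = p" using assms(2) by (simp add: resolvent_root_def)
  moreover have "0 \<le> sqrt (p^2 + 12*r)" using assms(1) by simp
  ultimately show ?thesis by linarith
qed

lemma depressed_quartic_at_square_root:
  fixes m p q r u :: real
  assumes "3*m^2 + 2*p*m = 4*r" "u^2 = m/2"
  shows "u^4 + p*u^2 + q*u + r = m*(m + p) + q*u"
proof -
  have "u^4 = (m/2)^2" using assms(2) by (metis power2_eq_square power4_eq_xxxx mult.assoc)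
  moreover have "r = (3*m^2 + 2*p*m) / 4" using assms(1) by simp
  ultimately show ?thesis unfolding assms(2) by (simp add: field_simps power2_eq_square)
qed

lemma linear_coeff_eq_0_if_nonneg:
  fixes p q :: real
  assumes "\<And>u. 0 \<le> u^4 + p*u^2 + q*u"
  shows "q = 0"
proof -
  have "((\<lambda>u. u^4 + p*u^2 + q*u) has_real_derivative q) (at 0)"
    by (auto intro!: derivative_eq_intros)
  then show ?thesis
    by (rule DERIV_local_min[where d = 1]) (simp_all add: assms)
qed

lemma resolvent_bounds_if_depressed_quartic_nonneg:
  fixes p q r :: real
  assumes nonneg: "\<And>u. 0 \<le> u^4 + p*u^2 + q*u + r"
  defines "m \<equiv> resolvent_root p r"
  shows "0 \<le> m + p" "q^2 \<le> 2*m*(m + p)^2"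
proof -
  have "0 \<le> r" using nonneg[of 0] by simp
  then have m0: "0 \<le> m" and res: "3*m^2 + 2*p*m = 4*r"
    unfolding m_def using resolvent_root_nonneg resolvent_root_eq by auto
  define w where "w = sqrt (m/2)"
  have w: "0 \<le> w" "w^2 = m/2" "(-w)^2 = m/2" using m0 by (simp_all add: w_def)
  have "0 \<le> m*(m + p) + q*w"
    using nonneg[of w] unfolding depressed_quartic_at_square_root[OF res w(2)] .
  moreover have "0 \<le> m*(m + p) + q*(-w)"
    using nonneg[of "-w"] unfolding depressed_quartic_at_square_root[OF res w(3)] .
  ultimately have bound: "\<bar>q\<bar> * w \<le> m*(m + p)"
    using w(1) by (auto simp: abs_if)
  then have "0 \<le> m*(m + p)"
    using w(1) by (meson abs_ge_zero mult_nonneg_nonneg order_trans)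
  have "0 \<le> m + p \<and> q^2 \<le> 2*m*(m + p)^2"
  proof (cases "m = 0")
    case True
    then have "0 \<le> p" using \<open>0 \<le> r\<close> resolvent_root_eq_0D unfolding m_def by blast
    moreover have "q = 0"
      using nonneg res True by (intro linear_coeff_eq_0_if_nonneg) simp
    ultimately show ?thesis using True by simp
  next
    case False
    then have "0 < m" "0 < w" using m0 by (simp_all add: w_def)
    have "0 \<le> m + p" using \<open>0 \<le> m*(m + p)\<close> \<open>0 < m\<close> by (simp add: zero_le_mult_iff)
    moreover have "(\<bar>q\<bar> * w)^2 \<le> (m*(m + p))^2"
      using bound w(1) by (intro power_mono) auto
    then have "q^2 * (m/2) \<le> m^2 * (m + p)^2"
      using w(2) by (simp add: power_mult_distrib)
    then have "m * q^2 \<le> m * (2*m*(m + p)^2)"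
      by (simp add: power2_eq_square algebra_simps)
    ultimately show ?thesis using \<open>0 < m\<close> by simp
  qed
  then show "0 \<le> m + p" "q^2 \<le> 2*m*(m + p)^2" by auto
qed

lemma resolvent_bounds_if_depressed_quartic_pos:
  fixes p q r :: real
  assumes pos: "\<And>u. 0 < u^4 + p*u^2 + q*u + r"
  defines "m \<equiv> resolvent_root p r"
  shows "0 < m + p" "q^2 < 2*m*(m + p)^2"
proof -
  have "0 < r" using pos[of 0] by simp
  then have "0 < m" and res: "3*m^2 + 2*p*m = 4*r"
    unfolding m_def using resolvent_root_pos resolvent_root_eq by auto
  define w where "w = sqrt (m/2)"
  have w: "0 < w" "w^2 = m/2" "(-w)^2 = m/2" using \<open>0 < m\<close> by (simp_all add: w_def)
  have "0 < m*(m + p) + q*w"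
    using pos[of w] unfolding depressed_quartic_at_square_root[OF res w(2)] .
  moreover have "0 < m*(m + p) + q*(-w)"
    using pos[of "-w"] unfolding depressed_quartic_at_square_root[OF res w(3)] .
  ultimately have bound: "\<bar>q\<bar> * w < m*(m + p)"
    using w(1) by (auto simp: abs_if)
  then have "0 < m*(m + p)"
    using w(1) by (meson abs_ge_zero mult_nonneg_nonneg le_less_trans less_imp_le)
  then show "0 < m + p" using \<open>0 < m\<close> by (simp add: zero_less_mult_iff)
  have "(\<bar>q\<bar> * w)^2 < (m*(m + p))^2"
    using bound w(1) by (intro power_strict_mono) auto
  then have "q^2 * (m/2) < m^2 * (m + p)^2"
    using w(2) by (simp add: power_mult_distrib)
  then have "m * q^2 < m * (2*m*(m + p)^2)"
    by (simp add: power2_eq_square algebra_simps)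
  then show "q^2 < 2*m*(m + p)^2" using \<open>0 < m\<close> by simp
qed

definition depressed_p :: "real \<Rightarrow> real \<Rightarrow> real" where
  "depressed_p a2 a3 = a2 - 3*a3^2/8"

definition depressed_q :: "real \<Rightarrow> real \<Rightarrow> real \<Rightarrow> real" where
  "depressed_q a1 a2 a3 = a1 - a2*a3/2 + a3^3/8"

definition depressed_r :: "real \<Rightarrow> real \<Rightarrow> real \<Rightarrow> real \<Rightarrow> real" where
  "depressed_r a0 a1 a2 a3 = quartic_form a0 a1 a2 a3 (-a3/4) 1"

lemma quartic_form_shift:
  "quartic_form a0 a1 a2 a3 (u - a3/4) 1 =
     u^4 + depressed_p a2 a3 * u^2 + depressed_q a1 a2 a3 * u + depressed_r a0 a1 a2 a3"
  unfolding quartic_form_def depressed_p_def depressed_q_def depressed_r_def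
  by (simp add: field_simps power2_eq_square power3_eq_cube power4_eq_xxxx)

lemma b1_b2_eq_depressed:
  "3 * b1 a0 a1 a2 a3 + 4 * (b2 a2)^2 = ((depressed_p a2 a3)^2 + 12 * depressed_r a0 a1 a2 a3) / 4"
  unfolding b1_def b2_def depressed_p_def depressed_r_def quartic_form_def
  by (simp add: field_simps power2_eq_square power3_eq_cube power4_eq_xxxx)

lemma lambda0_eq_resolvent_root:
  "lambda0 a0 a1 a2 a3 =
     a3^2/4 + depressed_p a2 a3 + resolvent_root (depressed_p a2 a3) (depressed_r a0 a1 a2 a3)"
proof -
  have "sqrt ((depressed_p a2 a3)^2 + 12 * depressed_r a0 a1 a2 a3) =
        2 * sqrt (3 * b1 a0 a1 a2 a3 + 4 * (b2 a2)^2)"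
    unfolding b1_b2_eq_depressed by (simp add: real_sqrt_divide)
  then show ?thesis
    unfolding lambda0_def resolvent_root_def by (simp add: depressed_p_def b2_def field_simps)
qed

lemma M_lambda_quadratic_form:
  "v \<bullet> (M_lambda a0 a1 a2 a3 l *v v) =
     (v$1)^2 + a3 * v$1 * v$2 + (a2 - l) * v$1 * v$3 + l * (v$2)^2 + a1 * v$2 * v$3 + a0 * (v$3)^2"
  unfolding M_lambda_def inner_vec_def matrix_vector_mult_def
  by (simp add: sum_3 algebra_simps power2_eq_square)

lemma M_lambda_symmetric: "transpose (M_lambda a0 a1 a2 a3 l) = M_lambda a0 a1 a2 a3 l"
  by (simp add: vec_eq_iff forall_3 transpose_def M_lambda_def)

lemma quartic_form_eq_M_lambda:
  "quartic_form a0 a1 a2 a3 x y =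
     (vector [x^2, x*y, y^2] :: real^3) \<bullet> (M_lambda a0 a1 a2 a3 l *v vector [x^2, x*y, y^2])"
  unfolding M_lambda_quadratic_form quartic_form_def
  by (simp add: algebra_simps power2_eq_square power3_eq_cube power4_eq_xxxx)

lemma M_lambda_quadratic_form_resolvent:
  fixes a0 a1 a2 a3 m :: real
  defines "p \<equiv> depressed_p a2 a3" and "q \<equiv> depressed_q a1 a2 a3"
    and "l \<equiv> a3^2/4 + depressed_p a2 a3 + m"
  assumes "3*m^2 + 2*p*m = 4 * depressed_r a0 a1 a2 a3"
  shows "v \<bullet> (M_lambda a0 a1 a2 a3 l *v v) =
     (v$1 + a3/2 * v$2 + (a2 - l)/2 * v$3)^2
     + ((m + p) * (v$2 + a3/4 * v$3)^2 + q * (v$2 + a3/4 * v$3) * v$3 + m*(m + p)/2 * (v$3)^2)"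
proof -
  have a0: "a0 = (3*m^2 + 2*p*m)/4 + 3*a3^4/256 - a2*a3^2/16 + a1*a3/4"
    using assms(4) unfolding depressed_r_def quartic_form_def
    by (simp add: field_simps power2_eq_square power3_eq_cube power4_eq_xxxx)
  show ?thesis unfolding M_lambda_quadratic_form l_def p_def q_def depressed_p_def depressed_q_def
    by (simp add: a0 p_def depressed_p_def field_simps power2_eq_square power3_eq_cube power4_eq_xxxx)
qed

lemma quartic_form_shift_nonneg_if_psd_form:
  assumes "psd_form (quartic_form a0 a1 a2 a3)"
  shows "0 \<le> u^4 + depressed_p a2 a3 * u^2 + depressed_q a1 a2 a3 * u + depressed_r a0 a1 a2 a3"
  using assms unfolding psd_form_def quartic_form_shift[symmetric] by simp

lemma quartic_form_shift_pos_if_pd_form: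
  assumes "pd_form (quartic_form a0 a1 a2 a3)"
  shows "0 < u^4 + depressed_p a2 a3 * u^2 + depressed_q a1 a2 a3 * u + depressed_r a0 a1 a2 a3"
  using assms unfolding pd_form_def quartic_form_shift[symmetric] by simp

lemma b1_b2_nonneg_if_psd_form:
  assumes "psd_form (quartic_form a0 a1 a2 a3)"
  shows "0 \<le> 3 * b1 a0 a1 a2 a3 + 4 * (b2 a2)^2"
  using quartic_form_shift_nonneg_if_psd_form[OF assms, of 0]
  unfolding b1_b2_eq_depressed by simp

lemma psd_matrix_M_lambda0_if_psd_form:
  assumes "psd_form (quartic_form a0 a1 a2 a3)"
  shows "psd_matrix (M_lambda a0 a1 a2 a3 (lambda0 a0 a1 a2 a3))"
proof -
  define p q r where "p = depressed_p a2 a3" and "q = depressed_q a1 a2 a3"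
    and "r = depressed_r a0 a1 a2 a3"
  define m where "m = resolvent_root p r"
  have nonneg: "0 \<le> u^4 + p*u^2 + q*u + r" for u
    unfolding p_def q_def r_def by (rule quartic_form_shift_nonneg_if_psd_form[OF assms])
  have "0 \<le> r" using nonneg[of 0] by simp
  then have "0 \<le> m" and res: "3*m^2 + 2*p*m = 4*r"
    unfolding m_def using resolvent_root_nonneg resolvent_root_eq by auto
  have "0 \<le> m + p" "q^2 \<le> 2*m*(m + p)^2"
    using resolvent_bounds_if_depressed_quartic_nonneg[OF nonneg] unfolding m_def .
  moreover have "2*m*(m + p)^2 = 4*(m + p)*(m*(m + p)/2)" by (simp add: power2_eq_square)
  ultimately have "0 \<le> v \<bullet> (M_lambda a0 a1 a2 a3 (lambda0 a0 a1 a2 a3) *v v)" for v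
    using res \<open>0 \<le> m\<close> binary_quadratic_form_nonneg[of "m + p" "m*(m + p)/2" q]
    unfolding lambda0_eq_resolvent_root p_def q_def r_def m_def
    by (simp add: M_lambda_quadratic_form_resolvent)
  then show ?thesis unfolding psd_matrix_def by (simp add: M_lambda_symmetric)
qed

lemma pd_matrix_M_lambda0_if_pd_form:
  assumes "pd_form (quartic_form a0 a1 a2 a3)"
  shows "pd_matrix (M_lambda a0 a1 a2 a3 (lambda0 a0 a1 a2 a3))"
proof -
  define p q r where "p = depressed_p a2 a3" and "q = depressed_q a1 a2 a3"
    and "r = depressed_r a0 a1 a2 a3"
  define m where "m = resolvent_root p r"
  have pos: "0 < u^4 + p*u^2 + q*u + r" for u
    unfolding p_def q_def r_def by (rule quartic_form_shift_pos_if_pd_form[OF assms])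
  have "0 \<le> r" using pos[of 0] by (simp add: less_imp_le)
  then have res: "3*m^2 + 2*p*m = 4*r"
    unfolding m_def by (rule resolvent_root_eq)
  have "0 < m + p" "q^2 < 2*m*(m + p)^2"
    using resolvent_bounds_if_depressed_quartic_pos[OF pos] unfolding m_def .
  moreover have "2*m*(m + p)^2 = 4*(m + p)*(m*(m + p)/2)" by (simp add: power2_eq_square)
  ultimately have binary_pos: "0 < (m + p)*x^2 + q*x*y + m*(m + p)/2*y^2"
    if "x \<noteq> 0 \<or> y \<noteq> 0" for x y
    using that by (intro binary_quadratic_form_pos) simp_all
  have "0 < v \<bullet> (M_lambda a0 a1 a2 a3 (lambda0 a0 a1 a2 a3) *v v)" if "v \<noteq> 0" for v
  proof (cases "v$2 + a3/4 * v$3 \<noteq> 0 \<or> v$3 \<noteq> 0")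
    case True
    then show ?thesis
      using res binary_pos[OF True]
      unfolding lambda0_eq_resolvent_root p_def q_def r_def m_def
      by (simp add: M_lambda_quadratic_form_resolvent add_nonneg_pos)
  next
    case False
    then have "v$2 = 0" "v$3 = 0" by auto
    moreover from this have "v$1 \<noteq> 0" using that by (auto simp: vec_eq_iff forall_3)
    ultimately show ?thesis
      using res
      unfolding lambda0_eq_resolvent_root p_def q_def r_def m_def
      by (simp add: M_lambda_quadratic_form_resolvent)
  qed
  then show ?thesis unfolding pd_matrix_def by (simp add: M_lambda_symmetric)
qed

lemma psd_form_if_psd_matrix:
  "psd_matrix (M_lambda a0 a1 a2 a3 l) \<Longrightarrow> psd_form (quartic_form a0 a1 a2 a3)"
  unfolding psd_matrix_def psd_form_def by (simp add: quartic_form_eq_M_lambda[where l = l])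

lemma pd_form_if_pd_matrix:
  assumes "pd_matrix (M_lambda a0 a1 a2 a3 l)"
  shows "pd_form (quartic_form a0 a1 a2 a3)"
  unfolding pd_form_def
proof (intro allI impI)
  fix x y :: real
  assume "x \<noteq> 0 \<or> y \<noteq> 0"
  then have "(vector [x^2, x*y, y^2] :: real^3) \<noteq> 0"
    by (auto simp: vec_eq_iff forall_3)
  then show "0 < quartic_form a0 a1 a2 a3 x y"
    using assms unfolding pd_matrix_def by (simp add: quartic_form_eq_M_lambda[where l = l])
qed

theorem theorem1:
  fixes a0 a1 a2 a3 :: real
  shows "(psd_form (quartic_form a0 a1 a2 a3) \<longleftrightarrow>
            (3 * b1 a0 a1 a2 a3 + 4 * (b2 a2)^2 \<ge> 0 \<and>
             psd_matrix (M_lambda a0 a1 a2 a3 (lambda0 a0 a1 a2 a3))))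
       \<and> (pd_form (quartic_form a0 a1 a2 a3) \<longleftrightarrow>
            (3 * b1 a0 a1 a2 a3 + 4 * (b2 a2)^2 \<ge> 0 \<and>
             pd_matrix (M_lambda a0 a1 a2 a3 (lambda0 a0 a1 a2 a3))))"
proof -
  have "pd_form (quartic_form a0 a1 a2 a3) \<Longrightarrow> psd_form (quartic_form a0 a1 a2 a3)"
    unfolding pd_form_def psd_form_def by (simp add: less_imp_le)
  then show ?thesis
    using b1_b2_nonneg_if_psd_form psd_matrix_M_lambda0_if_psd_form psd_form_if_psd_matrix
      pd_matrix_M_lambda0_if_pd_form pd_form_if_pd_matrix
    by (metis (no_types))
qed

end
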